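(* Let $r\ge 2$, $d\ge 1$ be integers and $n=(r-1)d+1$. Let $F_1,\ldots,F_n\subset\mathbb{R}^d$ be pairwise disjoint sets, each of cardinality $r$, such that the coordinates of all points of $F_1\cup\cdots\cup F_n$ are algebraically independent, and let $M\subset[n]$. Then there is a colourful partition $A_1,\ldots,A_r$ of $F_1\cup\cdots\cup F_n$ (so $|F_i\cap A_j|=1$; write $F_i\cap A_j=\{x_{i,j}\}$), a point $z\in\mathbb{R}^d$ and real numbers $\alpha_1,\ldots,\alpha_n$ such that \[ z=\sum_{i=1}^n\alpha_i\,x_{i,j}\quad\text{and}\quad \sum_{i=1}^n\alpha_i=1\qquad\text{for all } j\in[r], \] and either ($\alpha_i>0$ for all $i\in M$ and $\alpha_i<0$ for all $i\in[n]\setminus M$) or ($\alpha_i<0$ for all $i\in M$ and $\alpha_i>0$ for all $i\in[n]\setminus M$). In particular the coefficient of $x_{i,j}$ in the affine combination for $A_j$ is $\alpha_i$, independent of $j$.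
   Context: $[n]=\{1,\ldots,n\}$. The sets $F_i$ are regarded as colour classes; a colourful partition of them into $r$ sets is a partition $A_1,\ldots,A_r$ of $F_1\cup\cdots\cup F_n$ with $|F_i\cap A_j|=1$ for all $i\in[n]$, $j\in[r]$. *)

theory Defs
  imports "HOL-Analysis.Analysis"
begin

text \<open>A polynomial is a finitely supported function
  from monomials (exponent vectors supported in I) to coefficients.\<close>
definition alg_indep :: "'i set \<Rightarrow> ('i \<Rightarrow> real) \<Rightarrow> bool" where
  "alg_indep I x \<longleftrightarrow>
     (\<forall>p :: ('i \<Rightarrow> nat) \<Rightarrow> rat.
        finite {m. p m \<noteq> 0}
        \<and> (\<forall>m. p m \<noteq> 0 \<longrightarrow> (\<forall>i. i \<notin> I \<longrightarrow> m i = 0))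
        \<and> (\<Sum>m\<in>{m. p m \<noteq> 0}. of_rat (p m) * (\<Prod>i\<in>I. x i ^ m i)) = 0
        \<longrightarrow> (\<forall>m. p m = 0))"

definition colourful_partition ::
  "nat \<Rightarrow> nat \<Rightarrow> (nat \<Rightarrow> 'a set) \<Rightarrow> (nat \<Rightarrow> 'a set) \<Rightarrow> bool" where
  "colourful_partition n r F A \<longleftrightarrow>
     (\<Union>j\<in>{1..r}. A j) = (\<Union>i\<in>{1..n}. F i)
     \<and> (\<forall>j\<in>{1..r}. \<forall>j'\<in>{1..r}. j \<noteq> j' \<longrightarrow> A j \<inter> A j' = {})
     \<and> (\<forall>i\<in>{1..n}. \<forall>j\<in>{1..r}. card (F i \<inter> A j) = 1)"

end

theory Submission
  imports Defs "Jordan_Normal_Form.Determinant" "HOL-Analysis.Finite_Function_Topology"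
    "HOL-Number_Theory.Cong"
begin

no_notation vec_index (infixl "$" 100)

text \<open>Enumerate each colour class \<open>F i\<close> as \<open>x(i,1), ..., x(i,r)\<close>, up to a cyclic rotation
  \<open>s i\<close> still to be chosen. An affine combination \<open>z = \<Sum>i. \<alpha> i *\<^sub>R x(i,j)\<close> that is the same
  for all \<open>j\<close> amounts to a linear relation \<open>\<Sum>i. \<alpha> i *\<^sub>R v i = 0\<close>, where \<open>v i\<close> collects the
  differences \<open>x(i,j) - x(i,1)\<close>, \<open>j = 2..r\<close>, in a space of dimension \<open>(r - 1) d = n - 1\<close>.
  Summed over the \<open>r\<close> rotations, \<open>v i\<close> vanishes, so the colourful Caratheodory theorem applied
  to the vectors \<open>\<plusminus>v i\<close>, signed according to \<open>M\<close>, yields rotations and a vanishing convex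
  combination of the signed vectors. Algebraic independence makes every \<open>n \<times> n\<close> determinant
  involved nonzero: it is a rational polynomial in the coordinates that does not vanish at a
  suitable 0/1 configuration. Hence all coefficients of the combination are positive and their
  signed sum is nonzero; normalising gives \<open>\<alpha>\<close>.\<close>

section \<open>Polynomial functions with rational coefficients\<close>

inductive rat_poly_fun :: "'v set \<Rightarrow> (('v \<Rightarrow> real) \<Rightarrow> real) \<Rightarrow> bool" for V where
  const: "rat_poly_fun V (\<lambda>y. of_rat c)"
| var: "v \<in> V \<Longrightarrow> rat_poly_fun V (\<lambda>y. y v)"
| add: "rat_poly_fun V f \<Longrightarrow> rat_poly_fun V g \<Longrightarrow> rat_poly_fun V (\<lambda>y. f y + g y)"
| mult: "rat_poly_fun V f \<Longrightarrow> rat_poly_fun V g \<Longrightarrow> rat_poly_fun V (\<lambda>y. f y * g y)"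

definition monomial_value :: "'v set \<Rightarrow> ('v \<Rightarrow> nat) \<Rightarrow> ('v \<Rightarrow> real) \<Rightarrow> real" where
  "monomial_value V m y = (\<Prod>v\<in>V. y v ^ m v)"

definition eval_terms :: "'v set \<Rightarrow> (rat \<times> ('v \<Rightarrow> nat)) list \<Rightarrow> ('v \<Rightarrow> real) \<Rightarrow> real" where
  "eval_terms V L y = (\<Sum>(c, m)\<leftarrow>L. of_rat c * monomial_value V m y)"

lemma eval_terms_append: "eval_terms V (L @ L') y = eval_terms V L y + eval_terms V L' y"
  by (simp add: eval_terms_def)

lemma monomial_value_add:
  "finite V \<Longrightarrow> monomial_value V (\<lambda>v. m v + m' v) y = monomial_value V m y * monomial_value V m' y"
  by (simp add: monomial_value_def power_add prod.distrib)

lemma eval_terms_times: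
  assumes "finite V"
  shows "eval_terms V (concat (map (\<lambda>(c, m). map (\<lambda>(c', m'). (c * c', \<lambda>v. m v + m' v)) L') L)) y
    = eval_terms V L y * eval_terms V L' y"
proof (induction L)
  case Nil
  then show ?case by (simp add: eval_terms_def)
next
  case (Cons cm L)
  obtain c m where [simp]: "cm = (c, m)" by fastforce
  have "eval_terms V (map (\<lambda>(c', m'). (c * c', \<lambda>v. m v + m' v)) L') y
      = of_rat c * monomial_value V m y * eval_terms V L' y"
    by (induction L') (auto simp: eval_terms_def monomial_value_add[OF assms] of_rat_mult algebra_simps)
  with Cons show ?case
    by (simp add: eval_terms_append) (simp add: eval_terms_def algebra_simps)
qed

lemma rat_poly_fun_eval_terms:
  assumes "rat_poly_fun V f" "finite V"
  shows "\<exists>L. (\<forall>(c, m)\<in>set L. \<forall>v. v \<notin> V \<longrightarrow> m v = 0) \<and> f = eval_terms V L"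
  using assms(1)
proof induction
  case (const c)
  show ?case
    by (rule exI[of _ "[(c, \<lambda>_. 0)]"]) (auto simp: eval_terms_def monomial_value_def)
next
  case (var v)
  have "monomial_value V (\<lambda>w. if w = v then 1 else 0) y = y v" for y
    using var assms(2) by (simp add: monomial_value_def if_distrib prod.delta cong: if_cong)
  then show ?case
    by (intro exI[of _ "[(1, \<lambda>w. if w = v then 1 else 0)]"]) (auto simp: var eval_terms_def)
next
  case (add f g)
  then obtain L L' where "\<forall>(c, m)\<in>set L. \<forall>v. v \<notin> V \<longrightarrow> m v = 0" "f = eval_terms V L"
    "\<forall>(c, m)\<in>set L'. \<forall>v. v \<notin> V \<longrightarrow> m v = 0" "g = eval_terms V L'" by blast
  then show ?case by (intro exI[of _ "L @ L'"]) (auto simp: eval_terms_append)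
next
  case (mult f g)
  then obtain L L' where "\<forall>(c, m)\<in>set L. \<forall>v. v \<notin> V \<longrightarrow> m v = 0" "f = eval_terms V L"
    "\<forall>(c, m)\<in>set L'. \<forall>v. v \<notin> V \<longrightarrow> m v = 0" "g = eval_terms V L'" by blast
  then show ?case
    by (intro exI[of _ "concat (map (\<lambda>(c, m). map (\<lambda>(c', m'). (c * c', \<lambda>v. m v + m' v)) L') L)"])
       (auto simp: eval_terms_times[OF assms(2)])
qed

definition term_coeff :: "(rat \<times> ('v \<Rightarrow> nat)) list \<Rightarrow> ('v \<Rightarrow> nat) \<Rightarrow> rat" where
  "term_coeff L m = (\<Sum>(c, m')\<leftarrow>L. if m' = m then c else 0)"

lemma term_coeff_nonzero: "term_coeff L m \<noteq> 0 \<Longrightarrow> m \<in> snd ` set L"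
  by (induction L) (auto simp: term_coeff_def split: if_splits)

lemma eval_terms_collect:
  assumes "finite S" "snd ` set L \<subseteq> S"
  shows "(\<Sum>m\<in>S. of_rat (term_coeff L m) * monomial_value V m y) = eval_terms V L y"
  using assms(2)
proof (induction L)
  case Nil
  then show ?case by (simp add: term_coeff_def eval_terms_def)
next
  case (Cons cm L)
  obtain c m where [simp]: "cm = (c, m)" by fastforce
  have coeff: "term_coeff (cm # L) m' = (if m = m' then c else 0) + term_coeff L m'" for m'
    by (simp add: term_coeff_def)
  have "(\<Sum>m'\<in>S. of_rat (term_coeff (cm # L) m') * monomial_value V m' y)
      = (\<Sum>m'\<in>S. if m = m' then of_rat c * monomial_value V m' y else 0)
        + (\<Sum>m'\<in>S. of_rat (term_coeff L m') * monomial_value V m' y)"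
    unfolding sum.distrib[symmetric] coeff by (intro sum.cong) (auto simp: of_rat_add distrib_right)
  also have "(\<Sum>m'\<in>S. if m = m' then of_rat c * monomial_value V m' y else 0) = of_rat c * monomial_value V m y"
    using Cons.prems assms(1) by simp
  finally show ?case using Cons by (simp add: eval_terms_def)
qed

lemma alg_indep_rat_poly_fun_vanishes:
  assumes "alg_indep V x" "rat_poly_fun V f" "finite V" "f x = 0"
  shows "f y = 0"
proof -
  obtain L where L: "\<forall>(c, m)\<in>set L. \<forall>v. v \<notin> V \<longrightarrow> m v = 0" "f = eval_terms V L"
    using rat_poly_fun_eval_terms[OF assms(2,3)] by blast
  define supp where "supp = {m. term_coeff L m \<noteq> 0}"
  have supp_sub: "supp \<subseteq> snd ` set L"
    using term_coeff_nonzero by (auto simp: supp_def)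
  have f_eq: "f z = (\<Sum>m\<in>supp. of_rat (term_coeff L m) * monomial_value V m z)" for z
  proof -
    have "f z = (\<Sum>m\<in>snd ` set L. of_rat (term_coeff L m) * monomial_value V m z)"
      using eval_terms_collect[of "snd ` set L" L V z] L(2) by simp
    also have "\<dots> = (\<Sum>m\<in>supp. of_rat (term_coeff L m) * monomial_value V m z)"
      by (rule sum.mono_neutral_right) (use supp_sub in \<open>auto simp: supp_def\<close>)
    finally show ?thesis .
  qed
  have "finite {m. term_coeff L m \<noteq> 0} \<and> (\<forall>m. term_coeff L m \<noteq> 0 \<longrightarrow> (\<forall>v. v \<notin> V \<longrightarrow> m v = 0))
      \<and> (\<Sum>m\<in>{m. term_coeff L m \<noteq> 0}. of_rat (term_coeff L m) * (\<Prod>v\<in>V. x v ^ m v)) = 0"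
    using supp_sub finite_subset term_coeff_nonzero L(1) f_eq[of x] assms(4)
    by (fastforce simp: supp_def monomial_value_def)
  then have "\<forall>m. term_coeff L m = 0"
    using assms(1) unfolding alg_indep_def by blast
  then show ?thesis using f_eq[of y] by simp
qed

lemma rat_poly_fun_Rats: "c \<in> \<rat> \<Longrightarrow> rat_poly_fun V (\<lambda>y. c)"
  by (elim Rats_cases) (simp add: rat_poly_fun.const)

lemma rat_poly_fun_diff:
  "rat_poly_fun V f \<Longrightarrow> rat_poly_fun V g \<Longrightarrow> rat_poly_fun V (\<lambda>y. f y - g y)"
  using rat_poly_fun.add[OF _ rat_poly_fun.mult[OF rat_poly_fun_Rats[of "-1"]], of V f g] by simp

lemma rat_poly_fun_sum:
  "finite A \<Longrightarrow> (\<And>a. a \<in> A \<Longrightarrow> rat_poly_fun V (f a)) \<Longrightarrow> rat_poly_fun V (\<lambda>y. \<Sum>a\<in>A. f a y)"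
  by (induction A rule: finite_induct) (auto intro: rat_poly_fun.add rat_poly_fun_Rats)

lemma rat_poly_fun_prod:
  "finite A \<Longrightarrow> (\<And>a. a \<in> A \<Longrightarrow> rat_poly_fun V (f a)) \<Longrightarrow> rat_poly_fun V (\<lambda>y. \<Prod>a\<in>A. f a y)"
  by (induction A rule: finite_induct) (auto intro: rat_poly_fun.mult rat_poly_fun_Rats)

lemma rat_poly_fun_det:
  assumes "\<And>a b. a < m \<Longrightarrow> b < m \<Longrightarrow> rat_poly_fun V (E a b)"
  shows "rat_poly_fun V (\<lambda>y. det (Matrix.mat m m (\<lambda>(a, b). E a b y)))"
proof -
  have "det (Matrix.mat m m (\<lambda>(a, b). E a b y)) =
      (\<Sum>p\<in>{p. p permutes {0..<m}}. of_int (sign p) * (\<Prod>a = 0..<m. E a (p a) y))" for y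
    unfolding det_def'[OF mat_carrier]
    by (intro sum.cong refl arg_cong2[where f = "(*)"] prod.cong) (auto simp: permutes_in_image)
  moreover have "rat_poly_fun V (\<lambda>y. \<Sum>p\<in>{p. p permutes {0..<m}}. of_int (sign p) * (\<Prod>a = 0..<m. E a (p a) y))"
    by (intro rat_poly_fun_sum rat_poly_fun.mult rat_poly_fun_Rats rat_poly_fun_prod assms)
       (auto simp: finite_permutations permutes_in_image)
  ultimately show ?thesis by simp
qed

section \<open>Generic nonsingularity of polynomial matrices\<close>

definition trivial_kernel :: "'r set \<Rightarrow> 'c set \<Rightarrow> ('r \<Rightarrow> 'c \<Rightarrow> real) \<Rightarrow> bool" where
  "trivial_kernel R C A \<longleftrightarrow> (\<forall>u. (\<forall>a\<in>R. (\<Sum>b\<in>C. A a b * u b) = 0) \<longrightarrow> (\<forall>b\<in>C. u b = 0))"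

lemma trivial_kernel_reindex:
  assumes "bij_betw \<rho> {..<m} R" "bij_betw \<gamma> {..<m} C"
  shows "trivial_kernel R C A \<longleftrightarrow> trivial_kernel {..<m} {..<m} (\<lambda>a b. A (\<rho> a) (\<gamma> b))"
proof -
  have sum_C: "(\<Sum>b\<in>C. A a b * u b) = (\<Sum>b<m. A a (\<gamma> b) * u (\<gamma> b))" for a u
    using sum.reindex_bij_betw[OF assms(2), of "\<lambda>b. A a b * u b"] by simp
  have R_eq: "R = \<rho> ` {..<m}" and C_eq: "C = \<gamma> ` {..<m}"
    using assms by (auto simp: bij_betw_def)
  show ?thesis
  proof
    assume ker: "trivial_kernel R C A"
    show "trivial_kernel {..<m} {..<m} (\<lambda>a b. A (\<rho> a) (\<gamma> b))"
      unfolding trivial_kernel_def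
    proof (intro allI impI ballI)
      fix u b assume u: "\<forall>a\<in>{..<m}. (\<Sum>b<m. A (\<rho> a) (\<gamma> b) * u b) = 0" and b: "b \<in> {..<m}"
      define u' where "u' = u \<circ> the_inv_into {..<m} \<gamma>"
      have u'_\<gamma>: "u' (\<gamma> b) = u b" if "b < m" for b
        using the_inv_into_f_f[OF bij_betw_imp_inj_on[OF assms(2)]] that by (simp add: u'_def)
      have "\<forall>a\<in>R. (\<Sum>b\<in>C. A a b * u' b) = 0"
        using u by (auto simp: R_eq sum_C u'_\<gamma>)
      then have "u' (\<gamma> b) = 0"
        using ker b by (auto simp: trivial_kernel_def C_eq)
      then show "u b = 0" using b u'_\<gamma> by simp
    qed
  next
    assume ker: "trivial_kernel {..<m} {..<m} (\<lambda>a b. A (\<rho> a) (\<gamma> b))"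
    show "trivial_kernel R C A"
      unfolding trivial_kernel_def
    proof (intro allI impI ballI)
      fix u b assume u: "\<forall>a\<in>R. (\<Sum>b\<in>C. A a b * u b) = 0" and "b \<in> C"
      then obtain b' where "b' < m" "b = \<gamma> b'" by (auto simp: C_eq)
      moreover have "\<forall>a<m. (\<Sum>b<m. A (\<rho> a) (\<gamma> b) * u (\<gamma> b)) = 0"
        using u by (auto simp: R_eq sum_C)
      ultimately show "u b = 0"
        using ker by (auto simp: trivial_kernel_def)
    qed
  qed
qed

lemma det_nonzero_iff_trivial_kernel:
  "det (Matrix.mat m m (\<lambda>(a, b). A a b)) \<noteq> 0 \<longleftrightarrow> trivial_kernel {..<m} {..<m} (A :: nat \<Rightarrow> nat \<Rightarrow> real)"
proof -
  let ?A = "Matrix.mat m m (\<lambda>(a, b). A a b)"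
  have mult_vec: "?A *\<^sub>v Matrix.vec m u = Matrix.vec m (\<lambda>a. \<Sum>b<m. A a b * u b)" for u
    by (auto simp: mult_mat_vec_def scalar_prod_def atLeast0LessThan intro!: sum.cong)
  have "det ?A \<noteq> 0 \<longleftrightarrow> (\<forall>v\<in>carrier_vec m. ?A *\<^sub>v v = 0\<^sub>v m \<longrightarrow> v = 0\<^sub>v m)"
    using det_0_iff_vec_prod_zero_field[of ?A m] by auto
  also have "\<dots> \<longleftrightarrow> (\<forall>u. ?A *\<^sub>v Matrix.vec m u = 0\<^sub>v m \<longrightarrow> Matrix.vec m u = 0\<^sub>v m)"
    by (metis carrier_vecD eq_vecI index_vec vec_carrier)
  also have "\<dots> \<longleftrightarrow> trivial_kernel {..<m} {..<m} A"
    by (simp add: mult_vec trivial_kernel_def vec_eq_iff Ball_def)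
  finally show ?thesis .
qed

lemma trivial_kernel_iff_det:
  assumes "bij_betw \<rho> {..<m} R" "bij_betw \<gamma> {..<m} C"
  shows "trivial_kernel R C A \<longleftrightarrow> det (Matrix.mat m m (\<lambda>(a, b). A (\<rho> a) (\<gamma> b))) \<noteq> 0"
  unfolding trivial_kernel_reindex[OF assms] det_nonzero_iff_trivial_kernel ..

lemma square_matrix_bijections:
  assumes "finite R" "finite C" "card C = card R"
  obtains \<rho> \<gamma> where "bij_betw \<rho> {..<card R} R" "bij_betw \<gamma> {..<card R} C"
  using ex_bij_betw_nat_finite[OF assms(1)] ex_bij_betw_nat_finite[OF assms(2)] assms(3) that
  by (auto simp: atLeast0LessThan)

lemma trivial_kernel_transpose:
  assumes "finite R" "finite C" "card C = card R" "trivial_kernel R C A"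
  shows "trivial_kernel C R (\<lambda>b a. A a b)"
proof -
  obtain \<rho> \<gamma> where bij: "bij_betw \<rho> {..<card R} R" "bij_betw \<gamma> {..<card R} C"
    using square_matrix_bijections[OF assms(1-3)] .
  have "det (transpose_mat (Matrix.mat (card R) (card R) (\<lambda>(a, b). A (\<rho> a) (\<gamma> b)))) \<noteq> 0"
    using assms(4) by (simp add: det_transpose[OF mat_carrier] trivial_kernel_iff_det[OF bij])
  moreover have "transpose_mat (Matrix.mat (card R) (card R) (\<lambda>(a, b). A (\<rho> a) (\<gamma> b)))
      = Matrix.mat (card R) (card R) (\<lambda>(b, a). A (\<rho> a) (\<gamma> b))"
    by auto
  ultimately show ?thesis
    by (simp add: trivial_kernel_iff_det[OF bij(2,1)])
qed

lemma trivial_kernel_generic: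
  fixes E :: "'r \<Rightarrow> 'c \<Rightarrow> ('v \<Rightarrow> real) \<Rightarrow> real"
  assumes "finite V" "finite R" "finite C" "card C = card R"
    and "\<And>a b. a \<in> R \<Longrightarrow> b \<in> C \<Longrightarrow> rat_poly_fun V (E a b)"
    and "alg_indep V x" "trivial_kernel R C (\<lambda>a b. E a b y)"
  shows "trivial_kernel R C (\<lambda>a b. E a b x)"
proof -
  obtain \<rho> \<gamma> where bij: "bij_betw \<rho> {..<card R} R" "bij_betw \<gamma> {..<card R} C"
    using square_matrix_bijections[OF assms(2-4)] .
  let ?det = "\<lambda>y. det (Matrix.mat (card R) (card R) (\<lambda>(a, b). E (\<rho> a) (\<gamma> b) y))"
  have "rat_poly_fun V ?det"
    using bij by (intro rat_poly_fun_det assms(5)) (auto simp: bij_betw_def)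
  then show ?thesis
    using assms(7) alg_indep_rat_poly_fun_vanishes[OF assms(6) _ assms(1), of ?det y]
    by (auto simp: trivial_kernel_iff_det[OF bij])
qed

section \<open>A colourful Caratheodory theorem for generic point sets\<close>

lemma convex_hull_image_coefficients:
  fixes f :: "'i \<Rightarrow> 'a::real_vector"
  assumes "finite I" "x \<in> convex hull (f ` I)"
  obtains u where "\<And>i. i \<in> I \<Longrightarrow> 0 \<le> u i" "sum u I = 1" "(\<Sum>i\<in>I. u i *\<^sub>R f i) = x"
proof -
  obtain \<mu> where \<mu>: "\<forall>y\<in>f ` I. 0 \<le> \<mu> y" "sum \<mu> (f ` I) = 1" "(\<Sum>y\<in>f ` I. \<mu> y *\<^sub>R y) = x"
    using assms by (auto simp: convex_hull_finite)
  define mult where "mult i = real (card {j \<in> I. f j = f i})" for i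
  have mult_pos: "mult i > 0" if "i \<in> I" for i
    using assms(1) that by (auto simp: mult_def card_gt_0_iff)
  define u where "u i = \<mu> (f i) / mult i" for i
  have spread: "(\<Sum>i\<in>I. u i *\<^sub>R g (f i)) = (\<Sum>y\<in>f ` I. \<mu> y *\<^sub>R g y)" for g :: "'a \<Rightarrow> 'b::real_vector"
  proof -
    have "(\<Sum>i\<in>{j \<in> I. f j = y}. u i *\<^sub>R g (f i)) = \<mu> y *\<^sub>R g y" if "y \<in> f ` I" for y
    proof -
      obtain i where i: "i \<in> I" "y = f i" using \<open>y \<in> f ` I\<close> by blast
      have "(\<Sum>i'\<in>{j \<in> I. f j = y}. u i' *\<^sub>R g (f i')) = (\<Sum>i'\<in>{j \<in> I. f j = y}. (\<mu> y / mult i) *\<^sub>R g y)"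
        by (intro sum.cong) (auto simp: u_def mult_def i)
      also have "\<dots> = \<mu> y *\<^sub>R g y"
        using mult_pos[OF i(1)] by (simp add: mult_def i sum_constant_scaleR)
      finally show ?thesis .
    qed
    then show ?thesis
      by (simp add: sum.image_gen[OF assms(1), of "\<lambda>i. u i *\<^sub>R g (f i)" f])
  qed
  show thesis
  proof
    show "0 \<le> u i" if "i \<in> I" for i
      using \<mu>(1) mult_pos[OF that] that by (simp add: u_def)
    show "sum u I = 1" using spread[of "\<lambda>_. 1 :: real"] \<mu>(2) by simp
    show "(\<Sum>i\<in>I. u i *\<^sub>R f i) = x" using spread[of id] \<mu>(3) by simp
  qed
qed

lemma lookup_scaleR_poly_mapping: "Poly_Mapping.lookup (a *\<^sub>R x) c = a * Poly_Mapping.lookup x c"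
proof -
  have "finite {c. a *\<^sub>R Poly_Mapping.lookup x c \<noteq> 0}"
    by (rule finite_subset[OF _ finite_lookup[of x]]) auto
  then show ?thesis by (simp add: scaleR_poly_mapping_def)
qed

lemma continuous_on_lookup: "continuous_on S (\<lambda>y :: 'c \<Rightarrow>\<^sub>0 real. Poly_Mapping.lookup y c)"
proof -
  have "dist (Poly_Mapping.lookup y c) (Poly_Mapping.lookup z c) \<le> dist y z" for y z :: "'c \<Rightarrow>\<^sub>0 real"
  proof (cases "c \<in> Poly_Mapping.keys y \<union> Poly_Mapping.keys z")
    case True
    then show ?thesis
      unfolding dist_poly_mapping_def
      by (intro member_le_sum) auto
  next
    case False
    then show ?thesis by (simp add: in_keys_iff)
  qed
  then show ?thesis
    unfolding continuous_on_iff by (metis le_less_trans)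
qed

text \<open>Vectors in \<open>\<real>\<^sup>C\<close> are represented by finitely supported functions, which form a normed
  space (with the \<open>\<ell>\<^sub>1\<close> norm) in which convex hulls of finite sets are compact; the Euclidean
  structure used is that of the coordinates in \<open>C\<close>.\<close>
definition coord_inner :: "'c set \<Rightarrow> ('c \<Rightarrow>\<^sub>0 real) \<Rightarrow> ('c \<Rightarrow>\<^sub>0 real) \<Rightarrow> real" where
  "coord_inner C y z = (\<Sum>c\<in>C. Poly_Mapping.lookup y c * Poly_Mapping.lookup z c)"

lemma coord_inner_self_nonneg: "coord_inner C y y \<ge> 0"
  by (simp add: coord_inner_def sum_nonneg)

lemma coord_inner_sum_left:
  "coord_inner C (\<Sum>i\<in>I. u i *\<^sub>R y i) z = (\<Sum>i\<in>I. u i * coord_inner C (y i) z)"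
  unfolding coord_inner_def
  by (simp add: lookup_sum lookup_scaleR_poly_mapping sum_distrib_left sum_distrib_right
      sum.swap[where A = C] mult.assoc)

lemma coord_inner_segment:
  "coord_inner C (p + \<sigma> *\<^sub>R (y - p)) (p + \<sigma> *\<^sub>R (y - p))
    = coord_inner C p p - 2 * \<sigma> * (coord_inner C p p - coord_inner C y p) + \<sigma>\<^sup>2 * coord_inner C (y - p) (y - p)"
  unfolding coord_inner_def
  by (simp add: lookup_add lookup_minus lookup_scaleR_poly_mapping sum.distrib sum_subtractf
      sum_distrib_left power2_eq_square algebra_simps)

lemma coord_inner_descent:
  assumes "coord_inner C y p < coord_inner C p p"
  obtains \<sigma> where "0 < \<sigma>" "\<sigma> \<le> 1"
    "coord_inner C (p + \<sigma> *\<^sub>R (y - p)) (p + \<sigma> *\<^sub>R (y - p)) < coord_inner C p p"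
proof -
  define \<delta> where "\<delta> = coord_inner C p p - coord_inner C y p"
  define q where "q = coord_inner C (y - p) (y - p)"
  have "\<delta> > 0" "q \<ge> 0"
    using assms coord_inner_self_nonneg by (auto simp: \<delta>_def q_def)
  define \<sigma> where "\<sigma> = min 1 (\<delta> / (q + 1))"
  have \<sigma>: "0 < \<sigma>" "\<sigma> \<le> 1"
    using \<open>\<delta> > 0\<close> \<open>q \<ge> 0\<close> by (auto simp: \<sigma>_def)
  have "\<sigma> * q \<le> \<delta> / (q + 1) * q"
    using \<open>q \<ge> 0\<close> by (intro mult_right_mono) (auto simp: \<sigma>_def)
  also have "\<dots> \<le> \<delta>"
    using \<open>\<delta> > 0\<close> \<open>q \<ge> 0\<close> by (simp add: field_simps)
  finally have "\<sigma>\<^sup>2 * q \<le> \<sigma> * \<delta>"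
    using \<sigma> by (simp add: power2_eq_square mult.assoc mult_left_mono)
  moreover have "0 < \<sigma> * \<delta>"
    using \<sigma> \<open>\<delta> > 0\<close> by simp
  moreover have "coord_inner C (p + \<sigma> *\<^sub>R (y - p)) (p + \<sigma> *\<^sub>R (y - p))
      = coord_inner C p p - 2 * \<sigma> * \<delta> + \<sigma>\<^sup>2 * q"
    by (simp add: coord_inner_segment \<delta>_def q_def)
  ultimately have "coord_inner C (p + \<sigma> *\<^sub>R (y - p)) (p + \<sigma> *\<^sub>R (y - p)) < coord_inner C p p"
    by linarith
  with \<sigma> show thesis by (rule that)
qed

lemma coord_inner_min_variational:
  assumes "convex S" "p \<in> S" "y \<in> S" "\<And>z. z \<in> S \<Longrightarrow> coord_inner C p p \<le> coord_inner C z z"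
  shows "coord_inner C p p \<le> coord_inner C y p"
proof (rule ccontr)
  assume "\<not> ?thesis"
  then obtain \<sigma> where "0 < \<sigma>" "\<sigma> \<le> 1"
    and less: "coord_inner C (p + \<sigma> *\<^sub>R (y - p)) (p + \<sigma> *\<^sub>R (y - p)) < coord_inner C p p"
    using coord_inner_descent by (metis linorder_not_le)
  have "p + \<sigma> *\<^sub>R (y - p) = (1 - \<sigma>) *\<^sub>R p + \<sigma> *\<^sub>R y"
    by (simp add: algebra_simps)
  then have "p + \<sigma> *\<^sub>R (y - p) \<in> S"
    using assms(1-3) \<open>0 < \<sigma>\<close> \<open>\<sigma> \<le> 1\<close> by (simp add: convexD)
  then show False using assms(4) less by fastforce
qed

lemma min_point_in_facet:
  fixes t :: "'i \<Rightarrow> 'c \<Rightarrow>\<^sub>0 real"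
  assumes "finite I" and p: "p \<in> convex hull (t ` I)"
    and min: "\<And>y. y \<in> convex hull (t ` I) \<Longrightarrow> coord_inner C p p \<le> coord_inner C y y"
    and Q_pos: "0 < coord_inner C p p"
    and generic: "\<And>q. \<exists>i\<in>I. coord_inner C (t i) q \<noteq> 1"
  obtains k where "k \<in> I" "p \<in> convex hull (t ` (I - {k}))"
proof -
  let ?Q = "coord_inner C p p"
  have beyond: "?Q \<le> coord_inner C y p" if "y \<in> convex hull (t ` I)" for y
    using coord_inner_min_variational[OF convex_convex_hull p that min] .
  obtain u where u: "\<And>i. i \<in> I \<Longrightarrow> 0 \<le> u i" "sum u I = 1" "(\<Sum>i\<in>I. u i *\<^sub>R t i) = p"
    using convex_hull_image_coefficients[OF assms(1) p] by blast
  txt \<open>By genericity not all \<open>t i\<close> lie on the supporting hyperplane at \<open>p\<close>.\<close>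
  obtain k where k: "k \<in> I" "coord_inner C (t k) p > ?Q"
  proof -
    obtain k where "k \<in> I" "coord_inner C (t k) ((1 / ?Q) *\<^sub>R p) \<noteq> 1"
      using generic by blast
    moreover have "coord_inner C (t k) ((1 / ?Q) *\<^sub>R p) = coord_inner C (t k) p / ?Q"
      by (simp add: coord_inner_def lookup_scaleR_poly_mapping sum_divide_distrib)
    ultimately have "coord_inner C (t k) p \<noteq> ?Q" using Q_pos by simp
    moreover have "t k \<in> convex hull (t ` I)" using \<open>k \<in> I\<close> by (simp add: hull_inc)
    ultimately show thesis
      using beyond \<open>k \<in> I\<close> that by force
  qed
  have "(\<Sum>i\<in>I. u i * (coord_inner C (t i) p - ?Q))
      = (\<Sum>i\<in>I. u i * coord_inner C (t i) p) - sum u I * ?Q"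
    by (simp add: right_diff_distrib sum_subtractf sum_distrib_right)
  also have "\<dots> = coord_inner C (\<Sum>i\<in>I. u i *\<^sub>R t i) p - ?Q"
    by (simp add: coord_inner_sum_left u(2))
  finally have zero: "(\<Sum>i\<in>I. u i * (coord_inner C (t i) p - ?Q)) = 0"
    by (simp add: u(3))
  have nonneg: "0 \<le> u i * (coord_inner C (t i) p - ?Q)" if "i \<in> I" for i
    using u(1)[OF that] beyond[OF hull_inc[OF imageI[OF that]]] by simp
  have "\<forall>i\<in>I. u i * (coord_inner C (t i) p - ?Q) = 0"
    using sum_nonneg_eq_0_iff[OF assms(1) nonneg] zero by (rule iffD1)
  then have "u k = 0" using k by auto
  then have "(\<Sum>i\<in>I - {k}. u i *\<^sub>R t i) = p" "sum u (I - {k}) = 1"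
    using u(2,3) by (simp_all add: sum.remove[OF assms(1) k(1)])
  moreover have "(\<Sum>i\<in>I - {k}. u i *\<^sub>R t i) \<in> convex hull (t ` (I - {k}))"
    using assms(1) u(1) \<open>sum u (I - {k}) = 1\<close>
    by (intro convex_sum) (auto intro: hull_inc)
  ultimately show thesis using k(1) that by simp
qed

lemma balanced_point_below:
  fixes W :: "'k \<Rightarrow> 'c \<Rightarrow>\<^sub>0 real"
  assumes "finite K" "K \<noteq> {}" "\<And>c. c \<in> C \<Longrightarrow> (\<Sum>j\<in>K. Poly_Mapping.lookup (W j) c) = 0"
    and "0 < coord_inner C p p"
  obtains j where "j \<in> K" "coord_inner C (W j) p < coord_inner C p p"
proof (rule ccontr)
  assume "\<not> thesis"
  then have "\<forall>j\<in>K. coord_inner C p p \<le> coord_inner C (W j) p" using that by force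
  then have "card K * coord_inner C p p \<le> (\<Sum>j\<in>K. coord_inner C (W j) p)"
    using sum_mono[of K "\<lambda>_. coord_inner C p p"] by simp
  also have "(\<Sum>j\<in>K. coord_inner C (W j) p)
      = (\<Sum>c\<in>C. (\<Sum>j\<in>K. Poly_Mapping.lookup (W j) c) * Poly_Mapping.lookup p c)"
    unfolding coord_inner_def sum_distrib_right by (rule sum.swap)
  also have "\<dots> = 0"
    using assms(3) by simp
  finally show False
    using assms(1,2,4) by (simp add: mult_le_0_iff card_gt_0_iff)
qed

text \<open>Barany's argument: at a point \<open>p \<noteq> 0\<close> of minimal norm over all colourful hulls, some colour
  \<open>k\<close> is superfluous, and replacing it by a point of colour \<open>k\<close> on the near side of the supporting
  hyperplane (which exists since the points of each colour sum to zero) decreases the norm.\<close>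
lemma colourful_min_point_zero:
  fixes W :: "'i \<Rightarrow> 'k \<Rightarrow> 'c \<Rightarrow>\<^sub>0 real"
  assumes "finite I" "finite K" "K \<noteq> {}"
    and balanced: "\<And>i c. i \<in> I \<Longrightarrow> c \<in> C \<Longrightarrow> (\<Sum>k\<in>K. Poly_Mapping.lookup (W i k) c) = 0"
    and generic: "\<And>s q. s \<in> I \<rightarrow> K \<Longrightarrow> \<exists>i\<in>I. coord_inner C (W i (s i)) q \<noteq> 1"
    and s0: "s0 \<in> I \<rightarrow> K" and p: "p \<in> convex hull ((\<lambda>i. W i (s0 i)) ` I)"
    and min: "\<And>s y. s \<in> I \<rightarrow> K \<Longrightarrow> y \<in> convex hull ((\<lambda>i. W i (s i)) ` I) \<Longrightarrow>
      coord_inner C p p \<le> coord_inner C y y"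
  shows "coord_inner C p p = 0"
proof (rule ccontr)
  assume "coord_inner C p p \<noteq> 0"
  then have Q_pos: "0 < coord_inner C p p" using coord_inner_self_nonneg[of C p] by simp
  obtain k where k: "k \<in> I" "p \<in> convex hull ((\<lambda>i. W i (s0 i)) ` (I - {k}))"
    using min_point_in_facet[OF assms(1) p min[OF s0] Q_pos generic[OF s0]] by blast
  obtain j where j: "j \<in> K" "coord_inner C (W k j) p < coord_inner C p p"
    using balanced_point_below[OF assms(2,3) balanced[OF k(1)] Q_pos] by blast
  define s' where "s' = s0(k := j)"
  have s': "s' \<in> I \<rightarrow> K" using s0 j(1) by (auto simp: s'_def)
  have "(\<lambda>i. W i (s0 i)) ` (I - {k}) \<subseteq> (\<lambda>i. W i (s' i)) ` I"
    by (auto simp: s'_def)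
  then have p_s': "p \<in> convex hull ((\<lambda>i. W i (s' i)) ` I)"
    using k(2) hull_mono by blast
  have w_s': "W k j \<in> convex hull ((\<lambda>i. W i (s' i)) ` I)"
    using k(1) by (intro hull_inc) (auto simp: s'_def intro!: image_eqI[of _ _ k])
  obtain \<sigma> where \<sigma>: "0 < \<sigma>" "\<sigma> \<le> 1"
    "coord_inner C (p + \<sigma> *\<^sub>R (W k j - p)) (p + \<sigma> *\<^sub>R (W k j - p)) < coord_inner C p p"
    using coord_inner_descent[OF j(2)] by blast
  have "p + \<sigma> *\<^sub>R (W k j - p) = (1 - \<sigma>) *\<^sub>R p + \<sigma> *\<^sub>R W k j"
    by (simp add: algebra_simps)
  then have "p + \<sigma> *\<^sub>R (W k j - p) \<in> convex hull ((\<lambda>i. W i (s' i)) ` I)"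
    using \<sigma>(1,2) p_s' w_s' by (simp add: convexD)
  then show False using min[OF s'] \<sigma>(3) by fastforce
qed

lemma colourful_hulls_attain_inf:
  fixes W :: "'i \<Rightarrow> 'k \<Rightarrow> 'a::real_normed_vector" and f :: "'a \<Rightarrow> real"
  assumes "finite I" "I \<noteq> {}" "finite K" "K \<noteq> {}" "continuous_on UNIV f"
  obtains s0 p where "s0 \<in> I \<rightarrow> K" "p \<in> convex hull ((\<lambda>i. W i (s0 i)) ` I)"
    "\<And>s y. s \<in> I \<rightarrow> K \<Longrightarrow> y \<in> convex hull ((\<lambda>i. W i (s i)) ` I) \<Longrightarrow> f p \<le> f y"
proof -
  define H where "H s = convex hull ((\<lambda>i. W i (s i)) ` I)" for s
  have "compact (\<Union>s\<in>I \<rightarrow>\<^sub>E K. H s)"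
    using assms(1,3) by (intro compact_UN) (auto simp: H_def finite_PiE finite_imp_compact_convex_hull)
  moreover have "(\<Union>s\<in>I \<rightarrow>\<^sub>E K. H s) \<noteq> {}"
    using assms(2,4) by (auto simp: H_def PiE_eq_empty_iff)
  moreover have "continuous_on (\<Union>s\<in>I \<rightarrow>\<^sub>E K. H s) f"
    using assms(5) continuous_on_subset by blast
  ultimately have "\<exists>p\<in>(\<Union>s\<in>I \<rightarrow>\<^sub>E K. H s). \<forall>y\<in>(\<Union>s\<in>I \<rightarrow>\<^sub>E K. H s). f p \<le> f y"
    by (rule continuous_attains_inf)
  then obtain p where "p \<in> (\<Union>s\<in>I \<rightarrow>\<^sub>E K. H s)"
    and p_min: "\<And>y. y \<in> (\<Union>s\<in>I \<rightarrow>\<^sub>E K. H s) \<Longrightarrow> f p \<le> f y"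
    by blast
  then obtain s0 where s0: "s0 \<in> I \<rightarrow>\<^sub>E K" "p \<in> H s0" by blast
  show thesis
  proof
    show "s0 \<in> I \<rightarrow> K" using s0(1) by (auto simp: PiE_iff)
    show "p \<in> convex hull ((\<lambda>i. W i (s0 i)) ` I)" using s0(2) by (simp add: H_def)
    show "f p \<le> f y" if "s \<in> I \<rightarrow> K" "y \<in> convex hull ((\<lambda>i. W i (s i)) ` I)" for s y
    proof -
      have "H (restrict s I) = H s"
        unfolding H_def by (intro arg_cong[where f = "\<lambda>T. convex hull T"] image_cong) auto
      then have "restrict s I \<in> I \<rightarrow>\<^sub>E K" "y \<in> H (restrict s I)"
        using that by (auto simp: H_def)
      then show ?thesis using p_min by blast
    qed
  qed
qed

theorem colourful_caratheodory_generic: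
  fixes w :: "'i \<Rightarrow> 'k \<Rightarrow> 'c \<Rightarrow> real"
  assumes "finite I" "I \<noteq> {}" "finite K" "K \<noteq> {}" "finite C"
    and balanced: "\<And>i c. i \<in> I \<Longrightarrow> c \<in> C \<Longrightarrow> (\<Sum>k\<in>K. w i k c) = 0"
    and generic: "\<And>s q. s \<in> I \<rightarrow> K \<Longrightarrow> \<exists>i\<in>I. (\<Sum>c\<in>C. w i (s i) c * q c) \<noteq> 1"
  obtains s u where "s \<in> I \<rightarrow> K" "\<And>i. i \<in> I \<Longrightarrow> 0 \<le> u i" "sum u I = 1"
    "\<And>c. c \<in> C \<Longrightarrow> (\<Sum>i\<in>I. u i * w i (s i) c) = 0"
proof -
  define W where "W i k = Abs_poly_mapping (\<lambda>c. if c \<in> C then w i k c else 0)" for i k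
  have lookup_W: "Poly_Mapping.lookup (W i k) c = (if c \<in> C then w i k c else 0)" for i k c
    unfolding W_def using assms(5) by (subst lookup_Abs_poly_mapping) (auto elim: finite_subset[rotated])
  have "continuous_on UNIV (\<lambda>y. coord_inner C y y)"
    unfolding coord_inner_def by (intro continuous_intros continuous_on_lookup)
  then obtain s0 p where s0: "s0 \<in> I \<rightarrow> K" and p: "p \<in> convex hull ((\<lambda>i. W i (s0 i)) ` I)"
    and p_min: "\<And>s y. s \<in> I \<rightarrow> K \<Longrightarrow> y \<in> convex hull ((\<lambda>i. W i (s i)) ` I) \<Longrightarrow>
      coord_inner C p p \<le> coord_inner C y y"
    using colourful_hulls_attain_inf[OF assms(1-4), of "\<lambda>y. coord_inner C y y" W] by blast
  have "coord_inner C p p = 0"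
  proof (rule colourful_min_point_zero[where C = C and W = W, OF assms(1,3,4) _ _ s0 p p_min])
    show "(\<Sum>k\<in>K. Poly_Mapping.lookup (W i k) c) = 0" if "i \<in> I" "c \<in> C" for i c
      using balanced[OF that] that(2) by (simp add: lookup_W)
    show "\<exists>i\<in>I. coord_inner C (W i (s i)) q \<noteq> 1" if "s \<in> I \<rightarrow> K" for s q
      using generic[OF that, of "Poly_Mapping.lookup q"]
      by (simp add: coord_inner_def lookup_W cong: sum.cong)
  qed
  then have p_zero: "Poly_Mapping.lookup p c = 0" if "c \<in> C" for c
    using sum_nonneg_eq_0_iff[OF assms(5), of "\<lambda>c. (Poly_Mapping.lookup p c)\<^sup>2"] that
    by (simp add: coord_inner_def power2_eq_square)
  obtain u where u: "\<And>i. i \<in> I \<Longrightarrow> 0 \<le> u i" "sum u I = 1" "(\<Sum>i\<in>I. u i *\<^sub>R W i (s0 i)) = p"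
    using convex_hull_image_coefficients[OF assms(1) p] by blast
  show thesis
  proof
    show "(\<Sum>i\<in>I. u i * w i (s0 i) c) = 0" if "c \<in> C" for c
      using arg_cong[OF u(3), of "\<lambda>y. Poly_Mapping.lookup y c"] p_zero[OF that] that
      by (simp add: lookup_sum lookup_scaleR_poly_mapping lookup_W)
  qed (use s0 u in auto)
qed

section \<open>Rotations of the colour classes\<close>

lemma colourful_partition_of_enumerations:
  assumes disjoint: "\<And>i i'. i \<in> {1..n} \<Longrightarrow> i' \<in> {1..n} \<Longrightarrow> i \<noteq> i' \<Longrightarrow> F i \<inter> F i' = {}"
    and enum: "\<And>i. i \<in> {1..n} \<Longrightarrow> bij_betw (x i) {..<r} (F i)"
  defines "A \<equiv> \<lambda>j. (\<lambda>i. x i (j - 1)) ` {1..n}"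
  shows "colourful_partition n r F A"
    and "\<And>i j. i \<in> {1..n} \<Longrightarrow> j \<in> {1..r} \<Longrightarrow> F i \<inter> A j = {x i (j - 1)}"
proof -
  have x_in: "x i a \<in> F i" if "i \<in> {1..n}" "a < r" for i a
    using enum[OF that(1)] that(2) by (auto simp: bij_betw_def)
  have same_colour: "i = i'" if "i \<in> {1..n}" "i' \<in> {1..n}" "p \<in> F i" "p \<in> F i'" for i i' p
    using disjoint that by blast
  show meet: "F i \<inter> A j = {x i (j - 1)}" if "i \<in> {1..n}" "j \<in> {1..r}" for i j
    using that x_in same_colour[OF that(1), of _ "x _ (j - 1)"] by (fastforce simp: A_def)
  show "colourful_partition n r F A"
    unfolding colourful_partition_def
  proof (intro conjI ballI impI)
    show "(\<Union>j\<in>{1..r}. A j) = (\<Union>i\<in>{1..n}. F i)"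
    proof
      show "(\<Union>j\<in>{1..r}. A j) \<subseteq> (\<Union>i\<in>{1..n}. F i)"
      proof (rule UN_least)
        fix j assume "j \<in> {1..r}"
        then show "A j \<subseteq> (\<Union>i\<in>{1..n}. F i)" using x_in by (auto simp: A_def)
      qed
      show "(\<Union>i\<in>{1..n}. F i) \<subseteq> (\<Union>j\<in>{1..r}. A j)"
      proof
        fix p assume "p \<in> (\<Union>i\<in>{1..n}. F i)"
        then obtain i a where "i \<in> {1..n}" "a < r" "p = x i a"
          using enum by (fastforce simp: bij_betw_def)
        then have "p \<in> A (Suc a)" by (auto simp: A_def)
        with \<open>a < r\<close> show "p \<in> (\<Union>j\<in>{1..r}. A j)" by force
      qed
    qed
  next
    fix j j' assume j: "j \<in> {1..r}" "j' \<in> {1..r}" "j \<noteq> j'"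
    show "A j \<inter> A j' = {}"
    proof (rule ccontr)
      assume "A j \<inter> A j' \<noteq> {}"
      then obtain p where "p \<in> A j" "p \<in> A j'" by blast
      then obtain i i' where i: "i \<in> {1..n}" "i' \<in> {1..n}" and eq: "x i (j - 1) = x i' (j' - 1)"
        unfolding A_def by blast
      have "x i (j - 1) \<in> F i" "x i' (j' - 1) \<in> F i'"
        using j i by (auto intro!: x_in)
      then have "i = i'"
        using same_colour[OF i] eq by simp
      then have "j - 1 = j' - 1"
        using eq enum[OF i(1)] j by (auto simp: bij_betw_def inj_on_def)
      then show False using j by auto
    qed
  next
    show "card (F i \<inter> A j) = 1" if "i \<in> {1..n}" "j \<in> {1..r}" for i j
      using meet[OF that] by simp
  qed
qed

lemma bij_betw_rotate: "0 < r \<Longrightarrow> bij_betw (\<lambda>a. (a + k) mod r) {..<r} {..<(r::nat)}"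
proof -
  assume "0 < r"
  have "inj_on (\<lambda>a. (a + k) mod r) {..<r}"
    by (intro inj_onI) (metis cong_add_rcancel_nat cong_def lessThan_iff mod_less)
  moreover have "(\<lambda>a. (a + k) mod r) ` {..<r} \<subseteq> {..<r}"
    using \<open>0 < r\<close> by auto
  ultimately show ?thesis
    by (simp add: bij_betw_def endo_inj_surj)
qed

lemma sum_rotate: "0 < r \<Longrightarrow> (\<Sum>k<r. f ((a + k) mod r)) = (\<Sum>k<(r::nat). f k)"
proof -
  assume "0 < r"
  have "(\<Sum>k<r. f ((a + k) mod r)) = (\<Sum>k<r. f ((k + a) mod r))"
    by (simp only: add.commute)
  also have "\<dots> = (\<Sum>k<r. f k)"
    using sum.reindex_bij_betw[OF bij_betw_rotate[OF \<open>0 < r\<close>], of f a] .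
  finally show ?thesis .
qed

lemma sum_insert_None:
  "finite D \<Longrightarrow> (\<Sum>b\<in>insert None (Some ` D). f b) = f None + (\<Sum>c\<in>D. f (Some c))"
proof -
  assume "finite D"
  then have "(\<Sum>b\<in>insert None (Some ` D). f b) = f None + sum f (Some ` D)"
    by (subst sum.insert) auto
  also have "sum f (Some ` D) = (\<Sum>c\<in>D. f (Some c))"
    by (subst sum.reindex) (auto simp: inj_on_def)
  finally show ?thesis .
qed

definition sign_pattern :: "nat set \<Rightarrow> nat \<Rightarrow> real" where
  "sign_pattern M i = (if i \<in> M then 1 else -1)"

lemma sign_pattern_Rats: "sign_pattern M i \<in> \<rat>"
  by (simp add: sign_pattern_def)

lemma sign_pattern_mult_eq_1_iff: "sign_pattern M i * x = 1 \<longleftrightarrow> x = sign_pattern M i"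
  by (auto simp: sign_pattern_def)

lemma sign_pattern_divide:
  assumes "M \<subseteq> I" "\<And>i. i \<in> I \<Longrightarrow> 0 < sign_pattern M i * \<beta> i" "B \<noteq> 0"
  shows "((\<forall>i\<in>M. 0 < \<beta> i / B) \<and> (\<forall>i\<in>I - M. \<beta> i / B < 0))
    \<or> ((\<forall>i\<in>M. \<beta> i / B < 0) \<and> (\<forall>i\<in>I - M. 0 < \<beta> i / B))"
proof -
  have pos: "0 < \<beta> i" if "i \<in> M" for i
    using assms(1,2) that by (force simp: sign_pattern_def)
  have neg: "\<beta> i < 0" if "i \<in> I - M" for i
    using assms(2) that by (force simp: sign_pattern_def)
  show ?thesis
  proof (cases "0 < B")
    case True
    then show ?thesis using divide_pos_pos[OF pos True] divide_neg_pos[OF neg True] by blast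
  next
    case False
    then have "B < 0" using assms(3) by simp
    then show ?thesis using divide_pos_neg[OF pos] divide_neg_neg[OF neg] by blast
  qed
qed

locale enumerated_colour_classes =
  fixes F :: "nat \<Rightarrow> (real ^ 'd) set" and r n :: nat and pt :: "nat \<Rightarrow> nat \<Rightarrow> real ^ 'd"
  assumes r_pos: "0 < r"
    and n_eq: "n = (r - 1) * CARD('d) + 1"
    and disjoint: "\<And>i i'. i \<in> {1..n} \<Longrightarrow> i' \<in> {1..n} \<Longrightarrow> i \<noteq> i' \<Longrightarrow> F i \<inter> F i' = {}"
    and enum: "\<And>i. i \<in> {1..n} \<Longrightarrow> bij_betw (pt i) {..<r} (F i)"
begin

definition rotated :: "nat \<Rightarrow> nat \<Rightarrow> nat \<Rightarrow> real ^ 'd" where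
  "rotated i k a = pt i ((a + k) mod r)"

lemma bij_betw_rotated:
  assumes "i \<in> {1..n}" shows "bij_betw (rotated i k) {..<r} (F i)"
proof -
  have "rotated i k = pt i \<circ> (\<lambda>a. (a + k) mod r)"
    by (simp add: fun_eq_iff rotated_def)
  then show ?thesis
    using bij_betw_trans[OF bij_betw_rotate[OF r_pos, of k] enum[OF assms]] by simp
qed

lemma rotated_in:
  assumes "i \<in> {1..n}" shows "rotated i k a \<in> F i"
proof -
  have "(a + k) mod r < r" using r_pos by simp
  then show ?thesis using enum[OF assms] by (auto simp: rotated_def bij_betw_def)
qed

lemma rotated_eq_iff:
  assumes "i \<in> {1..n}" "i' \<in> {1..n}" "a < r" "a' < r"
  shows "rotated i (s i) a = rotated i' (s i') a' \<longleftrightarrow> i = i' \<and> a = a'"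
proof
  assume eq: "rotated i (s i) a = rotated i' (s i') a'"
  have "i = i'"
  proof (rule ccontr)
    assume "i \<noteq> i'"
    then have "F i \<inter> F i' = {}" by (rule disjoint[OF assms(1,2)])
    moreover have "rotated i (s i) a \<in> F i" by (rule rotated_in[OF assms(1)])
    moreover have "rotated i (s i) a \<in> F i'" unfolding eq by (rule rotated_in[OF assms(2)])
    ultimately show False by blast
  qed
  with eq have "rotated i (s i) a = rotated i (s i) a'" by simp
  then have "a = a'"
    by (rule inj_onD[OF bij_betw_imp_inj_on[OF bij_betw_rotated[OF assms(1)]]]) (use assms(3,4) in auto)
  with \<open>i = i'\<close> show "i = i' \<and> a = a'" ..
qed simp

definition coords :: "((real ^ 'd) \<times> 'd) set" where
  "coords = (\<Union>i\<in>{1..n}. F i) \<times> UNIV"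

definition point_coords :: "(real ^ 'd) \<times> 'd \<Rightarrow> real" where
  "point_coords = (\<lambda>(p, l). p $ l)"

definition diff_index :: "(nat \<times> 'd) set" where
  "diff_index = {1..<r} \<times> UNIV"

text \<open>A valuation \<open>y\<close> assigns a real number to every coordinate of every point, so the entries
  of \<open>affine_matrix s e y\<close> are polynomials in \<open>y\<close>. Row \<open>i\<close> is \<open>(e i, v i)\<close>, where at
  \<open>y = point_coords\<close> the vector \<open>v i\<close>, indexed by \<open>diff_index\<close>, is the difference vector of
  colour \<open>i\<close> rotated by \<open>s i\<close> from the proof idea above.\<close>
definition diff_coord :: "((real ^ 'd) \<times> 'd \<Rightarrow> real) \<Rightarrow> nat \<Rightarrow> nat \<Rightarrow> nat \<times> 'd \<Rightarrow> real" where
  "diff_coord y i k c = y (rotated i k (fst c), snd c) - y (rotated i k 0, snd c)"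

definition affine_matrix ::
  "(nat \<Rightarrow> nat) \<Rightarrow> (nat \<Rightarrow> real) \<Rightarrow> ((real ^ 'd) \<times> 'd \<Rightarrow> real) \<Rightarrow> nat \<Rightarrow> (nat \<times> 'd) option \<Rightarrow> real"
where
  "affine_matrix s e y i b = (case b of None \<Rightarrow> e i | Some c \<Rightarrow> diff_coord y i (s i) c)"

lemma finite_coords: "finite coords"
proof -
  have "finite (F i)" if "i \<in> {1..n}" for i
    using bij_betw_finite[OF enum[OF that]] by simp
  then show ?thesis by (simp add: coords_def)
qed

lemma finite_diff_index: "finite diff_index"
  by (simp add: diff_index_def)

lemma card_diff_index: "card diff_index = n - 1"
  by (simp add: diff_index_def card_cartesian_product n_eq)

lemma card_affine_columns: "card (insert None (Some ` diff_index)) = card {1..n}"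
  using card_diff_index n_eq by (simp add: card_image diff_index_def)


lemma diff_coord_unit_configuration:
  assumes \<pi>: "bij_betw \<pi> ({1..n} - {k}) diff_index" and i: "i \<in> {1..n}" and c: "c \<in> diff_index"
  shows "diff_coord (indicator ((\<lambda>i. (rotated i (s i) (fst (\<pi> i)), snd (\<pi> i))) ` ({1..n} - {k}))) i (s i) c
    = (if i \<noteq> k \<and> \<pi> i = c then 1 else 0)"
proof -
  define U where "U = (\<lambda>i. (rotated i (s i) (fst (\<pi> i)), snd (\<pi> i))) ` ({1..n} - {k})"
  have \<pi>_range: "1 \<le> fst (\<pi> i)" "fst (\<pi> i) < r" if "i \<in> {1..n} - {k}" for i
    using bij_betw_apply[OF \<pi> that] by (auto simp: diff_index_def)
  have c_range: "fst c < r" using c by (auto simp: diff_index_def)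
  have "(rotated i (s i) 0, snd c) \<notin> U"
  proof
    assume "(rotated i (s i) 0, snd c) \<in> U"
    then obtain i' where i': "i' \<in> {1..n} - {k}" "rotated i (s i) 0 = rotated i' (s i') (fst (\<pi> i'))"
      unfolding U_def by blast
    then have "0 = fst (\<pi> i')"
      using rotated_eq_iff[of i i' 0 "fst (\<pi> i')" s] i \<pi>_range[OF i'(1)] r_pos by blast
    then show False using \<pi>_range[OF i'(1)] by simp
  qed
  moreover have "(rotated i (s i) (fst c), snd c) \<in> U \<longleftrightarrow> i \<noteq> k \<and> \<pi> i = c"
  proof
    assume "(rotated i (s i) (fst c), snd c) \<in> U"
    then obtain i' where i': "i' \<in> {1..n} - {k}" "rotated i (s i) (fst c) = rotated i' (s i') (fst (\<pi> i'))"
      "snd c = snd (\<pi> i')" unfolding U_def by blast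
    then have "i = i'" "fst c = fst (\<pi> i')"
      using rotated_eq_iff[of i i' "fst c" "fst (\<pi> i')" s] i c_range \<pi>_range[OF i'(1)] by blast+
    then show "i \<noteq> k \<and> \<pi> i = c" using i' by (simp add: prod_eq_iff)
  next
    assume "i \<noteq> k \<and> \<pi> i = c"
    then show "(rotated i (s i) (fst c), snd c) \<in> U" using i unfolding U_def by force
  qed
  ultimately show ?thesis unfolding U_def[symmetric] by (simp add: diff_coord_def)
qed

lemma affine_matrix_witness:
  assumes "k \<in> {1..n}" "e k \<noteq> 0"
  obtains y where "trivial_kernel {1..n} (insert None (Some ` diff_index)) (affine_matrix s e y)"
proof -
  have "card ({1..n} - {k}) = card diff_index"
    using assms(1) card_diff_index by simp
  then obtain \<pi> where \<pi>: "bij_betw \<pi> ({1..n} - {k}) diff_index"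
    using finite_same_card_bij[OF finite_Diff[OF finite_atLeastAtMost] finite_diff_index] by blast
  txt \<open>The difference vectors of all colours but \<open>k\<close> become distinct unit vectors,
    that of colour \<open>k\<close> becomes zero.\<close>
  define y :: "(real ^ 'd) \<times> 'd \<Rightarrow> real"
    where "y = indicator ((\<lambda>i. (rotated i (s i) (fst (\<pi> i)), snd (\<pi> i))) ` ({1..n} - {k}))"
  have y_diff: "diff_coord y i (s i) c = (if i \<noteq> k \<and> \<pi> i = c then 1 else 0)"
    if "i \<in> {1..n}" "c \<in> diff_index" for i c
    unfolding y_def by (rule diff_coord_unit_configuration[OF \<pi> that])
  have "trivial_kernel {1..n} (insert None (Some ` diff_index)) (affine_matrix s e y)"
    unfolding trivial_kernel_def
  proof (intro allI impI)
    fix u assume ker: "\<forall>i\<in>{1..n}. (\<Sum>b\<in>insert None (Some ` diff_index). affine_matrix s e y i b * u b) = 0"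
    have row: "e i * u None + (if i \<noteq> k then u (Some (\<pi> i)) else 0) = 0" if i: "i \<in> {1..n}" for i
    proof -
      have "(\<Sum>c\<in>diff_index. diff_coord y i (s i) c * u (Some c))
          = (\<Sum>c\<in>diff_index. if i \<noteq> k \<and> c = \<pi> i then u (Some c) else 0)"
        by (intro sum.cong) (auto simp: y_diff[OF i])
      also have "\<dots> = (if i \<noteq> k then u (Some (\<pi> i)) else 0)"
        using bij_betw_apply[OF \<pi>, of i] i finite_diff_index by auto
      moreover have "(\<Sum>b\<in>insert None (Some ` diff_index). affine_matrix s e y i b * u b)
          = e i * u None + (\<Sum>c\<in>diff_index. diff_coord y i (s i) c * u (Some c))"
        unfolding sum_insert_None[OF finite_diff_index] by (simp add: affine_matrix_def)
      ultimately show ?thesis using ker i by simp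
    qed
    have "u None = 0" using row[OF assms(1)] assms(2) by simp
    moreover have "u (Some c) = 0" if "c \<in> diff_index" for c
    proof -
      have "c \<in> \<pi> ` ({1..n} - {k})" using \<pi> that by (simp add: bij_betw_def)
      then obtain i where "i \<in> {1..n} - {k}" "\<pi> i = c" by blast
      then show ?thesis using row[of i] \<open>u None = 0\<close> by auto
    qed
    ultimately show "\<forall>b\<in>insert None (Some ` diff_index). u b = 0" by blast
  qed
  then show thesis by (rule that)
qed

lemma rat_poly_fun_affine_matrix:
  assumes "\<And>i. e i \<in> \<rat>" "i \<in> {1..n}"
  shows "rat_poly_fun coords (\<lambda>y. affine_matrix s e y i b)"
proof (cases b)
  case None
  then show ?thesis using assms(1) by (simp add: affine_matrix_def rat_poly_fun_Rats)
next
  case (Some c)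
  have "(rotated i (s i) a, l) \<in> coords" for a l
    unfolding coords_def using rotated_in[OF assms(2)] assms(2) by blast
  then show ?thesis
    using Some by (simp add: affine_matrix_def diff_coord_def rat_poly_fun_diff rat_poly_fun.var)
qed

lemma affine_matrix_nonsingular:
  assumes "alg_indep coords point_coords" "\<And>i. e i \<in> \<rat>" "k \<in> {1..n}" "e k \<noteq> 0"
  shows "trivial_kernel {1..n} (insert None (Some ` diff_index)) (affine_matrix s e point_coords)"
    and "trivial_kernel (insert None (Some ` diff_index)) {1..n} (\<lambda>b i. affine_matrix s e point_coords i b)"
proof -
  have fin: "finite (insert None (Some ` diff_index))"
    using finite_diff_index by simp
  obtain y where "trivial_kernel {1..n} (insert None (Some ` diff_index)) (affine_matrix s e y)"
    using affine_matrix_witness[where e = e and s = s, OF assms(3,4)] .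
  then show nonsingular: "trivial_kernel {1..n} (insert None (Some ` diff_index)) (affine_matrix s e point_coords)"
    using trivial_kernel_generic[of coords "{1..n}" "insert None (Some ` diff_index)"
        "\<lambda>i b y. affine_matrix s e y i b" point_coords y]
      finite_coords fin card_affine_columns rat_poly_fun_affine_matrix[OF assms(2)] assms(1)
    by simp
  show "trivial_kernel (insert None (Some ` diff_index)) {1..n} (\<lambda>b i. affine_matrix s e point_coords i b)"
    using trivial_kernel_transpose[OF _ fin card_affine_columns nonsingular] by simp
qed

lemma affine_relation_trivial:
  assumes "alg_indep coords point_coords" "\<And>i. e i \<in> \<rat>" "k \<in> {1..n}" "e k \<noteq> 0"
    and "(\<Sum>i=1..n. \<beta> i * e i) = 0"
    and "\<And>c. c \<in> diff_index \<Longrightarrow> (\<Sum>i=1..n. \<beta> i * diff_coord point_coords i (s i) c) = 0"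
    and "i \<in> {1..n}"
  shows "\<beta> i = 0"
proof -
  have "\<forall>b\<in>insert None (Some ` diff_index). (\<Sum>i=1..n. affine_matrix s e point_coords i b * \<beta> i) = 0"
    using assms(5,6) by (auto simp: affine_matrix_def mult.commute)
  then show ?thesis
    using affine_matrix_nonsingular(2)[where e = e and s = s, OF assms(1-4)] assms(7) unfolding trivial_kernel_def by blast
qed

lemma differences_not_on_hyperplane:
  assumes "alg_indep coords point_coords" "\<And>i. e i \<in> \<rat>" "k \<in> {1..n}" "e k \<noteq> 0"
  shows "\<exists>i\<in>{1..n}. (\<Sum>c\<in>diff_index. diff_coord point_coords i (s i) c * q c) \<noteq> e i"
proof (rule ccontr)
  define u where "u b = (case b of None \<Rightarrow> -1 | Some c \<Rightarrow> q c)" for b :: "(nat \<times> 'd) option"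
  assume "\<not> ?thesis"
  then have "\<forall>i\<in>{1..n}. (\<Sum>b\<in>insert None (Some ` diff_index). affine_matrix s e point_coords i b * u b) = 0"
    by (simp add: sum_insert_None[OF finite_diff_index] affine_matrix_def u_def)
  then have "u None = 0"
    using affine_matrix_nonsingular(1)[where e = e and s = s, OF assms] unfolding trivial_kernel_def by blast
  then show False by (simp add: u_def)
qed

lemma sum_diff_coord_rotations:
  assumes "c \<in> diff_index"
  shows "(\<Sum>k<r. diff_coord point_coords i k c) = 0"
proof -
  have "(\<Sum>k<r. diff_coord point_coords i k c)
      = (\<Sum>k<r. pt i ((fst c + k) mod r) $ snd c) - (\<Sum>k<r. pt i ((0 + k) mod r) $ snd c)"
    by (simp add: diff_coord_def point_coords_def rotated_def sum_subtractf)
  also have "\<dots> = 0"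
    using sum_rotate[OF r_pos, of "\<lambda>a. pt i a $ snd c" "fst c"]
      sum_rotate[OF r_pos, of "\<lambda>a. pt i a $ snd c" 0] by simp
  finally show ?thesis .
qed

lemma colourful_relation:
  assumes "alg_indep coords point_coords"
  obtains s u where "\<And>i. i \<in> {1..n} \<Longrightarrow> 0 \<le> u i" "sum u {1..n} = 1"
    "\<And>c. c \<in> diff_index \<Longrightarrow> (\<Sum>i=1..n. u i * (sign_pattern M i * diff_coord point_coords i (s i) c)) = 0"
proof -
  have balanced: "(\<Sum>k<r. sign_pattern M i * diff_coord point_coords i k c) = 0" if "c \<in> diff_index" for i c
    using sum_diff_coord_rotations[OF that] by (simp flip: sum_distrib_left)
  have generic: "\<exists>i\<in>{1..n}. (\<Sum>c\<in>diff_index. sign_pattern M i * diff_coord point_coords i (s i) c * q c) \<noteq> 1"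
    for s q
  proof -
    have "1 \<in> {1..n}" "sign_pattern M 1 \<noteq> 0"
      using n_eq by (auto simp: sign_pattern_def)
    then obtain i where "i \<in> {1..n}" "(\<Sum>c\<in>diff_index. diff_coord point_coords i (s i) c * q c) \<noteq> sign_pattern M i"
      using differences_not_on_hyperplane[where e = "sign_pattern M" and s = s and q = q,
          OF assms sign_pattern_Rats] by blast
    then show ?thesis
      by (auto simp: mult.assoc sign_pattern_mult_eq_1_iff simp flip: sum_distrib_left)
  qed
  show thesis
  proof (rule colourful_caratheodory_generic[of "{1..n}" "{..<r}" diff_index
        "\<lambda>i k c. sign_pattern M i * diff_coord point_coords i k c"])
    fix s u
    assume "\<And>i. i \<in> {1..n} \<Longrightarrow> 0 \<le> u i" "sum u {1..n} = 1"
      "\<And>c. c \<in> diff_index \<Longrightarrow> (\<Sum>i\<in>{1..n}. u i * (sign_pattern M i * diff_coord point_coords i (s i) c)) = 0"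
    then show thesis by (rule that)
  next
    show "\<exists>i\<in>{1..n}. (\<Sum>c\<in>diff_index. sign_pattern M i * diff_coord point_coords i (s i) c * q c) \<noteq> 1"
      for s q by (rule generic)
  qed (use balanced finite_diff_index n_eq r_pos in auto)
qed

lemma diff_coord_relation_imp_affine:
  assumes "\<And>c. c \<in> diff_index \<Longrightarrow> (\<Sum>i=1..n. \<beta> i * diff_coord point_coords i (s i) c) = 0"
    and "a < r"
  shows "(\<Sum>i=1..n. \<beta> i *\<^sub>R rotated i (s i) a) = (\<Sum>i=1..n. \<beta> i *\<^sub>R rotated i (s i) 0)"
proof (cases "a = 0")
  case False
  show ?thesis
  proof (rule Finite_Cartesian_Product.vec_eq_iff[THEN iffD2], rule allI)
    fix l
    have "(a, l) \<in> diff_index" using False assms(2) by (simp add: diff_index_def)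
    from assms(1)[OF this]
    show "(\<Sum>i=1..n. \<beta> i *\<^sub>R rotated i (s i) a) $ l = (\<Sum>i=1..n. \<beta> i *\<^sub>R rotated i (s i) 0) $ l"
      by (simp add: diff_coord_def point_coords_def right_diff_distrib sum_subtractf)
  qed
qed simp

lemma signed_affine_relation:
  assumes "alg_indep coords point_coords"
  obtains \<beta> s where "\<And>i. i \<in> {1..n} \<Longrightarrow> 0 < sign_pattern M i * \<beta> i"
    "(\<Sum>i=1..n. \<beta> i) \<noteq> 0"
    "\<And>a. a < r \<Longrightarrow> (\<Sum>i=1..n. \<beta> i *\<^sub>R rotated i (s i) a) = (\<Sum>i=1..n. \<beta> i *\<^sub>R rotated i (s i) 0)"
proof -
  obtain s u where u: "\<And>i. i \<in> {1..n} \<Longrightarrow> 0 \<le> u i" "sum u {1..n} = 1"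
    and rel_u: "\<And>c. c \<in> diff_index \<Longrightarrow> (\<Sum>i=1..n. u i * (sign_pattern M i * diff_coord point_coords i (s i) c)) = 0"
    by (rule colourful_relation[OF assms, where M = M], rule that)
  define \<beta> where "\<beta> i = sign_pattern M i * u i" for i
  have rel: "(\<Sum>i=1..n. \<beta> i * diff_coord point_coords i (s i) c) = 0" if "c \<in> diff_index" for c
    using rel_u[OF that] by (simp add: \<beta>_def ac_simps)
  have \<beta>_eq_0_iff: "\<beta> i = 0 \<longleftrightarrow> u i = 0" for i
    by (simp add: \<beta>_def sign_pattern_def)
  txt \<open>Genericity forces every colour to take part in the relation, and the relation to be non-affine.\<close>
  have u_pos: "0 < u k" if k: "k \<in> {1..n}" for k
  proof (rule ccontr)
    assume "\<not> 0 < u k"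
    then have "\<beta> k = 0" using u(1)[OF k] \<beta>_eq_0_iff by simp
    then have "(\<Sum>i=1..n. \<beta> i * (if i = k then 1 else 0)) = 0"
      using k by (simp add: if_distrib sum.delta cong: if_cong)
    then have "\<beta> i = 0" if "i \<in> {1..n}" for i
      using affine_relation_trivial[OF assms _ k _ _ rel that, where e = "\<lambda>i. if i = k then 1 else 0"] by simp
    then have "sum u {1..n} = 0" by (simp add: \<beta>_eq_0_iff)
    then show False using u(2) by simp
  qed
  have "1 \<in> {1..n}" using n_eq by simp
  have "(\<Sum>i=1..n. \<beta> i) \<noteq> 0"
  proof
    assume "(\<Sum>i=1..n. \<beta> i) = 0"
    then have "\<beta> 1 = 0"
      using affine_relation_trivial[OF assms _ \<open>1 \<in> {1..n}\<close> _ _ rel \<open>1 \<in> {1..n}\<close>, where e = "\<lambda>_. 1"] by simp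
    then show False using u_pos[OF \<open>1 \<in> {1..n}\<close>] \<beta>_eq_0_iff by simp
  qed
  moreover have "0 < sign_pattern M i * \<beta> i" if "i \<in> {1..n}" for i
    using u_pos[OF that] by (simp add: \<beta>_def sign_pattern_def)
  ultimately show thesis
    using that diff_coord_relation_imp_affine[OF rel] by blast
qed


lemma colourful_affine_partition:
  assumes "alg_indep coords point_coords" "M \<subseteq> {1..n}"
  shows "\<exists>A x z \<alpha>. colourful_partition n r F A
           \<and> (\<forall>i\<in>{1..n}. \<forall>j\<in>{1..r}. F i \<inter> A j = {x i j})
           \<and> (\<forall>j\<in>{1..r}. z = (\<Sum>i=1..n. \<alpha> i *\<^sub>R x i j))
           \<and> (\<Sum>i=1..n. \<alpha> i) = 1
           \<and> (((\<forall>i\<in>M. \<alpha> i > 0) \<and> (\<forall>i\<in>{1..n} - M. \<alpha> i < 0))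
              \<or> ((\<forall>i\<in>M. \<alpha> i < 0) \<and> (\<forall>i\<in>{1..n} - M. \<alpha> i > 0)))"
proof -
  obtain \<beta> s where signs: "\<And>i. i \<in> {1..n} \<Longrightarrow> 0 < sign_pattern M i * \<beta> i"
    and sum_\<beta>: "(\<Sum>i=1..n. \<beta> i) \<noteq> 0"
    and rel: "\<And>a. a < r \<Longrightarrow> (\<Sum>i=1..n. \<beta> i *\<^sub>R rotated i (s i) a) = (\<Sum>i=1..n. \<beta> i *\<^sub>R rotated i (s i) 0)"
    by (rule signed_affine_relation[OF assms(1), where M = M], rule that)
  define \<alpha> where "\<alpha> i = \<beta> i / (\<Sum>i=1..n. \<beta> i)" for i
  define x where "x i j = rotated i (s i) (j - 1)" for i j
  define A where "A = (\<lambda>j. (\<lambda>i. x i j) ` {1..n})"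
  have "colourful_partition n r F A" "\<forall>i\<in>{1..n}. \<forall>j\<in>{1..r}. F i \<inter> A j = {x i j}"
    using colourful_partition_of_enumerations[of n F "\<lambda>i. rotated i (s i)" r] disjoint bij_betw_rotated
    by (simp_all add: A_def x_def)
  moreover have "(\<Sum>i=1..n. \<alpha> i *\<^sub>R rotated i (s i) 0) = (\<Sum>i=1..n. \<alpha> i *\<^sub>R x i j)" if "j \<in> {1..r}" for j
  proof -
    have "(\<Sum>i=1..n. \<alpha> i *\<^sub>R v i) = (1 / (\<Sum>i=1..n. \<beta> i)) *\<^sub>R (\<Sum>i=1..n. \<beta> i *\<^sub>R v i)"
      for v :: "nat \<Rightarrow> real ^ 'd"
      unfolding scaleR_sum_right scaleR_scaleR \<alpha>_def by (simp add: divide_inverse mult.commute)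
    moreover have "j - 1 < r" using that by auto
    ultimately show ?thesis using rel[of "j - 1"] by (simp only: x_def)
  qed
  moreover have "(\<Sum>i=1..n. \<alpha> i) = 1"
    using sum_\<beta> by (simp add: \<alpha>_def flip: sum_divide_distrib)
  moreover have "((\<forall>i\<in>M. \<alpha> i > 0) \<and> (\<forall>i\<in>{1..n} - M. \<alpha> i < 0))
      \<or> ((\<forall>i\<in>M. \<alpha> i < 0) \<and> (\<forall>i\<in>{1..n} - M. \<alpha> i > 0))"
    unfolding \<alpha>_def by (rule sign_pattern_divide[OF assms(2) signs sum_\<beta>])
  ultimately show ?thesis
    by (intro exI[of _ A] exI[of _ x] exI[of _ "\<Sum>i=1..n. \<alpha> i *\<^sub>R rotated i (s i) 0"] exI[of _ \<alpha>]) blast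
qed

end

theorem mainTheorem6:
  fixes F :: "nat \<Rightarrow> (real ^ 'd) set" and r n :: nat and M :: "nat set"
  assumes "r \<ge> 2"
    and "n = (r - 1) * CARD('d) + 1"
    and "\<forall>i\<in>{1..n}. \<forall>i'\<in>{1..n}. i \<noteq> i' \<longrightarrow> F i \<inter> F i' = {}"
    and "\<forall>i\<in>{1..n}. finite (F i) \<and> card (F i) = r"
    and "alg_indep ((\<Union>i\<in>{1..n}. F i) \<times> (UNIV :: 'd set)) (\<lambda>(p, k). p $ k)"
    and "M \<subseteq> {1..n}"
  shows "\<exists>A :: nat \<Rightarrow> (real ^ 'd) set. \<exists>x :: nat \<Rightarrow> nat \<Rightarrow> real ^ 'd.
           \<exists>z :: real ^ 'd. \<exists>\<alpha> :: nat \<Rightarrow> real.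
           colourful_partition n r F A
           \<and> (\<forall>i\<in>{1..n}. \<forall>j\<in>{1..r}. F i \<inter> A j = {x i j})
           \<and> (\<forall>j\<in>{1..r}. z = (\<Sum>i=1..n. \<alpha> i *\<^sub>R x i j))
           \<and> (\<Sum>i=1..n. \<alpha> i) = 1
           \<and> (((\<forall>i\<in>M. \<alpha> i > 0) \<and> (\<forall>i\<in>{1..n} - M. \<alpha> i < 0))
              \<or> ((\<forall>i\<in>M. \<alpha> i < 0) \<and> (\<forall>i\<in>{1..n} - M. \<alpha> i > 0)))"
proof -
  have "\<forall>i\<in>{1..n}. \<exists>e. bij_betw e {..<r} (F i)"
    using assms(4) ex_bij_betw_nat_finite by (metis atLeast0LessThan)
  then obtain pt where pt: "\<And>i. i \<in> {1..n} \<Longrightarrow> bij_betw (pt i) {..<r} (F i)"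
    by metis
  interpret enumerated_colour_classes F r n pt
  proof
    show "0 < r" using assms(1) by simp
    show "F i \<inter> F i' = {}" if "i \<in> {1..n}" "i' \<in> {1..n}" "i \<noteq> i'" for i i'
      using assms(3) that by blast
  qed (use assms(2) pt in auto)
  have "alg_indep coords point_coords"
    using assms(5) by (simp add: coords_def point_coords_def)
  then show ?thesis
    by (rule colourful_affine_partition[OF _ assms(6)])
qed

end
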